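(* Let $(\Omega,\mathcal{F},\mathbb{P})$ be a nonatomic probability space and let $(\Phi,\Psi)$ be an Orlicz pair as in the context. The following statements are equivalent: (1a) every proper, convex, law-invariant functional $\rho:L^\Phi\to(-\infty,\infty]$ that is norm lower semicontinuous (with respect to $\|\cdot\|_\Phi$) has the Fatou property; (1b) every proper, quasiconvex, law-invariant functional $\rho:L^\Phi\to(-\infty,\infty]$ that is norm lower semicontinuous has the Fatou property; (2) $\Phi$ satisfies the $\Delta_2$ condition.
   Context: $(\Omega,\mathcal{F},\mathbb{P})$ is a nonatomic probability space; random variables are identified up to a.s. equality. An Orlicz function is a convex, increasing $\Phi:[0,\infty)\to[0,\infty)$ with $\Phi(0)=0$; its conjugate is $\Psi(s)=\sup_{t\ge0}(ts-\Phi(t))$. Standing assumption: $\Phi(t)>0$ for $t>0$ and $\lim_{t\to\infty}\Phi(t)/t=\infty$. $L^\Phi$ is the space of random variables $X$ with $\|X\|_\Phi:=\inf\{\lambda>0:\mathbb{E}[\Phi(|X|/\lambda)]\le 1\}<\infty$ (a Banach space with this norm). $\Phi$ is $\Delta_2$ if there exist $t_0\in(0,\infty)$ and $k\in\mathbb{R}$ with $\Phi(2t)<k\Phi(t)$ for all $t\ge t_0$. A functional is proper if not identically $\infty$; quasiconvex if all sublevel sets $\{\rho\le\lambda\}$ are convex; law-invariant if $\rho(X)=\rho(Y)$ whenever $X,Y$ have the same law. $\rho$ has the Fatou property if whenever $X_n\to X$ a.s. and $|X_n|\le Y$ for some $Y\in L^\Phi$ and all $n$, then $\rho(X)\le\liminf_n\rho(X_n)$.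 *)

theory Defs
  imports "HOL-Probability.Probability"
begin

definition nonatomic :: "'a measure \<Rightarrow> bool" where
  "nonatomic M \<longleftrightarrow> (\<forall>A\<in>sets M. measure M A > 0 \<longrightarrow>
      (\<exists>B\<in>sets M. B \<subseteq> A \<and> 0 < measure M B \<and> measure M B < measure M A))"

definition orlicz_function :: "(real \<Rightarrow> real) \<Rightarrow> bool" where
  "orlicz_function \<Phi> \<longleftrightarrow> convex_on {0..} \<Phi> \<and> mono_on {0..} \<Phi> \<and> \<Phi> 0 = 0
     \<and> (\<forall>t>0. \<Phi> t > 0) \<and> filterlim (\<lambda>t. \<Phi> t / t) at_top at_top"

definition orlicz_conjugate :: "(real \<Rightarrow> real) \<Rightarrow> real \<Rightarrow> real" where
  "orlicz_conjugate \<Phi> s = (SUP t\<in>{0..}. t * s - \<Phi> t)"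

definition orlicz_set :: "'a measure \<Rightarrow> (real \<Rightarrow> real) \<Rightarrow> ('a \<Rightarrow> real) \<Rightarrow> real set" where
  "orlicz_set M \<Phi> X = {c. c > 0 \<and> (\<integral>\<^sup>+ \<omega>. ennreal (\<Phi> (\<bar>X \<omega>\<bar> / c)) \<partial>M) \<le> 1}"

definition orlicz_space :: "'a measure \<Rightarrow> (real \<Rightarrow> real) \<Rightarrow> ('a \<Rightarrow> real) set" where
  "orlicz_space M \<Phi> = {X. X \<in> borel_measurable M \<and> orlicz_set M \<Phi> X \<noteq> {}}"

definition orlicz_norm :: "'a measure \<Rightarrow> (real \<Rightarrow> real) \<Rightarrow> ('a \<Rightarrow> real) \<Rightarrow> real" where
  "orlicz_norm M \<Phi> X = Inf (orlicz_set M \<Phi> X)"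

definition Delta2 :: "(real \<Rightarrow> real) \<Rightarrow> bool" where
  "Delta2 \<Phi> \<longleftrightarrow> (\<exists>t0>0. \<exists>k::real. \<forall>t\<ge>t0. \<Phi> (2 * t) < k * \<Phi> t)"

text \<open>Properties of functionals rho on L^Phi with values in (-oo, oo]; only values on L^Phi matter.\<close>
definition proper_on :: "('a \<Rightarrow> real) set \<Rightarrow> (('a \<Rightarrow> real) \<Rightarrow> ereal) \<Rightarrow> bool" where
  "proper_on L \<rho> \<longleftrightarrow> (\<forall>X\<in>L. \<rho> X \<noteq> -\<infinity>) \<and> (\<exists>X\<in>L. \<rho> X \<noteq> \<infinity>)"

definition convex_functional :: "('a \<Rightarrow> real) set \<Rightarrow> (('a \<Rightarrow> real) \<Rightarrow> ereal) \<Rightarrow> bool" where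
  "convex_functional L \<rho> \<longleftrightarrow> (\<forall>X\<in>L. \<forall>Y\<in>L. \<forall>t::real. 0 < t \<and> t < 1 \<longrightarrow>
      \<rho> (\<lambda>\<omega>. t * X \<omega> + (1 - t) * Y \<omega>) \<le> ereal t * \<rho> X + ereal (1 - t) * \<rho> Y)"

definition quasiconvex_functional :: "('a \<Rightarrow> real) set \<Rightarrow> (('a \<Rightarrow> real) \<Rightarrow> ereal) \<Rightarrow> bool" where
  "quasiconvex_functional L \<rho> \<longleftrightarrow> (\<forall>c::real. \<forall>X\<in>L. \<forall>Y\<in>L. \<forall>t::real.
      \<rho> X \<le> ereal c \<and> \<rho> Y \<le> ereal c \<and> 0 \<le> t \<and> t \<le> 1 \<longrightarrow>
      \<rho> (\<lambda>\<omega>. t * X \<omega> + (1 - t) * Y \<omega>) \<le> ereal c)"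

definition law_invariant :: "'a measure \<Rightarrow> ('a \<Rightarrow> real) set \<Rightarrow> (('a \<Rightarrow> real) \<Rightarrow> ereal) \<Rightarrow> bool" where
  "law_invariant M L \<rho> \<longleftrightarrow> (\<forall>X\<in>L. \<forall>Y\<in>L. distr M borel X = distr M borel Y \<longrightarrow> \<rho> X = \<rho> Y)"

definition norm_lsc :: "'a measure \<Rightarrow> (real \<Rightarrow> real) \<Rightarrow> (('a \<Rightarrow> real) \<Rightarrow> ereal) \<Rightarrow> bool" where
  "norm_lsc M \<Phi> \<rho> \<longleftrightarrow> (\<forall>Xs X. (\<forall>n. Xs n \<in> orlicz_space M \<Phi>) \<longrightarrow> X \<in> orlicz_space M \<Phi> \<longrightarrow>
      (\<lambda>n. orlicz_norm M \<Phi> (\<lambda>\<omega>. Xs n \<omega> - X \<omega>)) \<longlonglongrightarrow> 0 \<longrightarrow>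
      \<rho> X \<le> liminf (\<lambda>n. \<rho> (Xs n)))"

definition fatou_property :: "'a measure \<Rightarrow> (real \<Rightarrow> real) \<Rightarrow> (('a \<Rightarrow> real) \<Rightarrow> ereal) \<Rightarrow> bool" where
  "fatou_property M \<Phi> \<rho> \<longleftrightarrow> (\<forall>Xs X Y. (\<forall>n. Xs n \<in> orlicz_space M \<Phi>) \<longrightarrow> X \<in> orlicz_space M \<Phi> \<longrightarrow>
      Y \<in> orlicz_space M \<Phi> \<longrightarrow>
      (AE \<omega> in M. (\<lambda>n. Xs n \<omega>) \<longlonglongrightarrow> X \<omega>) \<longrightarrow>
      (\<forall>n. AE \<omega> in M. \<bar>Xs n \<omega>\<bar> \<le> Y \<omega>) \<longrightarrow>
      \<rho> X \<le> liminf (\<lambda>n. \<rho> (Xs n)))"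

end

theory Submission
  imports Defs
begin

text \<open>
  If \<open>\<Phi>\<close> satisfies \<open>\<Delta>\<^sub>2\<close>, every element of \<open>L\<^sup>\<Phi>\<close> has finite modular at every scale,
  so a.s. convergence dominated in \<open>L\<^sup>\<Phi>\<close> implies norm convergence by dominated convergence,
  and norm lower semicontinuity yields the Fatou property for any functional whatsoever.

  If \<open>\<Phi>\<close> fails \<open>\<Delta>\<^sub>2\<close>, choose \<open>t\<^sub>n\<close> with \<open>\<Phi>(2 t\<^sub>n) \<ge> 2^(n+1) \<Phi>(t\<^sub>n)\<close> and, by
  nonatomicity, disjoint events \<open>A\<^sub>n\<close> of probability \<open>1 / (2^(n+1) \<Phi>(t\<^sub>n))\<close>. Then
  \<open>X = \<Sum>\<^sub>n t\<^sub>n 1\<^bsub>A\<^sub>n\<^esub>\<close> has \<open>E \<Phi>(X) = 1\<close> but \<open>E \<Phi>(2X) = \<infinity>\<close>, so \<open>X\<close> lies in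
  \<open>L\<^sup>\<Phi>\<close> but outside the Orlicz heart \<open>H\<^sup>\<Phi>\<close> of variables with \<open>E \<Phi>(|X|/c) < \<infinity>\<close>
  for all \<open>c > 0\<close>. The convex indicator of \<open>H\<^sup>\<Phi>\<close> is proper, convex, law invariant and norm
  lower semicontinuous, since \<open>H\<^sup>\<Phi>\<close> is a closed convex law-invariant set, yet it fails the
  Fatou property at \<open>X\<close>: the truncations of \<open>X\<close> are bounded, hence in \<open>H\<^sup>\<Phi>\<close>, and are
  dominated by \<open>|X|\<close>.
\<close>


lemma orlicz_function_mono:
  assumes "orlicz_function \<Phi>" "0 \<le> x" "x \<le> y"
  shows "\<Phi> x \<le> \<Phi> y"
  using assms unfolding orlicz_function_def by (auto intro: mono_onD)

lemma orlicz_function_nonneg: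
  assumes "orlicz_function \<Phi>" "0 \<le> x"
  shows "0 \<le> \<Phi> x"
  using orlicz_function_mono[OF assms(1) order_refl assms(2)] assms(1)
  unfolding orlicz_function_def by simp

lemma orlicz_function_scale_le:
  assumes "orlicz_function \<Phi>" "0 \<le> s" "0 \<le> m" "m \<le> 1"
  shows "\<Phi> (m * s) \<le> m * \<Phi> s"
proof -
  have "convex_on {0..} \<Phi>" "\<Phi> 0 = 0" using assms(1) unfolding orlicz_function_def by auto
  from convex_onD[OF this(1), of m 0 s] this(2) assms(2-4) show ?thesis by simp
qed

lemma orlicz_function_le_max_sum:
  assumes "orlicz_function \<Phi>" "0 \<le> s" "s \<le> max a b" "0 \<le> a" "0 \<le> b"
  shows "\<Phi> s \<le> \<Phi> a + \<Phi> b"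
  using orlicz_function_mono[OF assms(1,2,3)] orlicz_function_nonneg[OF assms(1)] assms(4,5)
  by (smt (verit) max_def)

lemma orlicz_function_tendsto_zero:
  assumes \<Phi>: "orlicz_function \<Phi>" and g: "(g \<longlongrightarrow> 0) F" "\<And>x. 0 \<le> g x"
  shows "((\<lambda>x. \<Phi> (g x)) \<longlongrightarrow> 0) F"
proof (rule tendsto_sandwich[of "\<lambda>_. 0" _ _ "\<lambda>x. g x * \<Phi> 1"])
  show "eventually (\<lambda>x. 0 \<le> \<Phi> (g x)) F"
    using orlicz_function_nonneg[OF \<Phi> g(2)] by simp
  show "eventually (\<lambda>x. \<Phi> (g x) \<le> g x * \<Phi> 1) F"
    using order_tendstoD(2)[OF g(1), of 1]
  proof (rule eventually_mono, simp)
    fix x assume "g x < 1"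
    then show "\<Phi> (g x) \<le> g x * \<Phi> 1"
      using orlicz_function_scale_le[OF \<Phi>, of 1 "g x"] g(2)[of x] by simp
  qed
  show "((\<lambda>x. g x * \<Phi> 1) \<longlongrightarrow> 0) F"
    using tendsto_mult_left_zero[OF g(1)] by simp
qed simp

lemma orlicz_function_measurable:
  assumes "orlicz_function \<Phi>" "f \<in> borel_measurable M" "0 \<le> c"
  shows "(\<lambda>\<omega>. \<Phi> (\<bar>f \<omega>\<bar> / c)) \<in> borel_measurable M"
    and "(\<lambda>\<omega>. ennreal (\<Phi> (\<bar>f \<omega>\<bar> / c))) \<in> borel_measurable M"
proof -
  have "mono (\<lambda>x. \<Phi> (max 0 x))"
    by (rule monoI) (auto intro!: orlicz_function_mono[OF assms(1)] simp: max_def)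
  then have "(\<lambda>x. \<Phi> (max 0 x)) \<in> borel_measurable borel"
    by (rule borel_measurable_mono)
  from measurable_compose[OF _ this, of "\<lambda>\<omega>. \<bar>f \<omega>\<bar> / c"] assms(2,3)
  show "(\<lambda>\<omega>. \<Phi> (\<bar>f \<omega>\<bar> / c)) \<in> borel_measurable M" by (simp add: max_absorb2)
  then show "(\<lambda>\<omega>. ennreal (\<Phi> (\<bar>f \<omega>\<bar> / c))) \<in> borel_measurable M" by measurable
qed

lemma orlicz_function_eventually_ge_one:
  assumes "orlicz_function \<Phi>"
  obtains T where "0 < T" "\<And>t. T \<le> t \<Longrightarrow> 1 \<le> \<Phi> t"
proof -
  have "filterlim (\<lambda>t. \<Phi> t / t) at_top at_top" using assms unfolding orlicz_function_def by auto
  then have "eventually (\<lambda>t. 1 \<le> \<Phi> t / t) at_top" by (simp add: filterlim_at_top)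
  then obtain T0 where T0: "\<And>t. T0 \<le> t \<Longrightarrow> 1 \<le> \<Phi> t / t" by (auto simp: eventually_at_top_linorder)
  show ?thesis
  proof (rule that[of "max 1 T0"])
    fix t assume "max 1 T0 \<le> t"
    with T0[of t] show "1 \<le> \<Phi> t" by (simp add: le_divide_eq)
  qed simp
qed

lemma delta2_doubling_bound:
  assumes "orlicz_function \<Phi>" "Delta2 \<Phi>"
  obtains k C where "0 \<le> k" "\<And>s. 0 \<le> s \<Longrightarrow> \<Phi> (2 * s) \<le> k * \<Phi> s + C"
proof -
  obtain t0 k where t0: "0 < t0" "\<And>t. t0 \<le> t \<Longrightarrow> \<Phi> (2 * t) < k * \<Phi> t"
    using assms(2) unfolding Delta2_def by auto
  show ?thesis
  proof (rule that[of "\<bar>k\<bar>" "\<Phi> (2 * t0)"])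
    fix s :: real assume s: "0 \<le> s"
    have "0 \<le> \<bar>k\<bar> * \<Phi> s" using orlicz_function_nonneg[OF assms(1) s] by simp
    moreover have "k * \<Phi> s \<le> \<bar>k\<bar> * \<Phi> s"
      using orlicz_function_nonneg[OF assms(1) s] by (intro mult_right_mono) auto
    moreover have "s < t0 \<Longrightarrow> \<Phi> (2 * s) \<le> \<Phi> (2 * t0)"
      using s by (intro orlicz_function_mono[OF assms(1)]) auto
    moreover have "0 \<le> \<Phi> (2 * t0)" using t0(1) orlicz_function_nonneg[OF assms(1)] by simp
    ultimately show "\<Phi> (2 * s) \<le> \<bar>k\<bar> * \<Phi> s + \<Phi> (2 * t0)"
      using t0(2)[of s] by (cases "t0 \<le> s") auto
  qed simp
qed

lemma not_delta2_doubling_sequence: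
  assumes "orlicz_function \<Phi>" "\<not> Delta2 \<Phi>"
  obtains t where "\<And>n. 0 < t n" "\<And>n. 1 \<le> \<Phi> (t n)" "\<And>n. 2 ^ Suc n * \<Phi> (t n) \<le> \<Phi> (2 * t n)"
proof -
  obtain T where T: "0 < T" "\<And>t. T \<le> t \<Longrightarrow> 1 \<le> \<Phi> t"
    using orlicz_function_eventually_ge_one[OF assms(1)] by blast
  have "\<forall>n. \<exists>t\<ge>T. 2 ^ Suc n * \<Phi> t \<le> \<Phi> (2 * t)"
    using assms(2) T(1) unfolding Delta2_def by (meson not_le)
  then obtain t where "\<And>n. T \<le> t n \<and> 2 ^ Suc n * \<Phi> (t n) \<le> \<Phi> (2 * t n)"
    by (metis choice)
  with T show ?thesis by (intro that[of t]) (auto intro: less_le_trans)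
qed

definition orlicz_modular :: "'a measure \<Rightarrow> (real \<Rightarrow> real) \<Rightarrow> ('a \<Rightarrow> real) \<Rightarrow> real \<Rightarrow> ennreal" where
  "orlicz_modular M \<Phi> X c = (\<integral>\<^sup>+ \<omega>. ennreal (\<Phi> (\<bar>X \<omega>\<bar> / c)) \<partial>M)"

lemma mem_orlicz_set_iff: "c \<in> orlicz_set M \<Phi> X \<longleftrightarrow> 0 < c \<and> orlicz_modular M \<Phi> X c \<le> 1"
  by (simp add: orlicz_set_def orlicz_modular_def)

lemma orlicz_modular_mono:
  assumes "orlicz_function \<Phi>" "0 < c" "0 < d" "\<And>\<omega>. \<bar>X \<omega>\<bar> / c \<le> \<bar>Y \<omega>\<bar> / d"
  shows "orlicz_modular M \<Phi> X c \<le> orlicz_modular M \<Phi> Y d"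
  unfolding orlicz_modular_def
  using assms by (intro nn_integral_mono ennreal_leI orlicz_function_mono[OF assms(1)]) auto

lemma orlicz_modular_le_add:
  assumes \<Phi>: "orlicz_function \<Phi>" and meas: "X \<in> borel_measurable M" "Y \<in> borel_measurable M"
    and pos: "0 < a" "0 < b" "0 < c"
    and le: "\<And>\<omega>. \<bar>Z \<omega>\<bar> / c \<le> max (\<bar>X \<omega>\<bar> / a) (\<bar>Y \<omega>\<bar> / b)"
  shows "orlicz_modular M \<Phi> Z c \<le> orlicz_modular M \<Phi> X a + orlicz_modular M \<Phi> Y b"
proof -
  have "orlicz_modular M \<Phi> Z c
      \<le> (\<integral>\<^sup>+ \<omega>. ennreal (\<Phi> (\<bar>X \<omega>\<bar> / a)) + ennreal (\<Phi> (\<bar>Y \<omega>\<bar> / b)) \<partial>M)"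
    unfolding orlicz_modular_def
  proof (rule nn_integral_mono)
    fix \<omega>
    have "\<Phi> (\<bar>Z \<omega>\<bar> / c) \<le> \<Phi> (\<bar>X \<omega>\<bar> / a) + \<Phi> (\<bar>Y \<omega>\<bar> / b)"
      using pos le by (intro orlicz_function_le_max_sum[OF \<Phi>]) auto
    then show "ennreal (\<Phi> (\<bar>Z \<omega>\<bar> / c)) \<le> ennreal (\<Phi> (\<bar>X \<omega>\<bar> / a)) + ennreal (\<Phi> (\<bar>Y \<omega>\<bar> / b))"
      using pos orlicz_function_nonneg[OF \<Phi>]
      by (simp add: ennreal_plus[symmetric] del: ennreal_plus)
  qed
  also have "\<dots> = orlicz_modular M \<Phi> X a + orlicz_modular M \<Phi> Y b"
    unfolding orlicz_modular_def using pos
    by (intro nn_integral_add orlicz_function_measurable(2)[OF \<Phi>] meas) auto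
  finally show ?thesis .
qed

lemma orlicz_modular_dilate:
  assumes \<Phi>: "orlicz_function \<Phi>" and X: "X \<in> borel_measurable M" and "0 < c" "1 \<le> N"
  shows "orlicz_modular M \<Phi> X (N * c) \<le> ennreal (1 / N) * orlicz_modular M \<Phi> X c"
proof -
  have "orlicz_modular M \<Phi> X (N * c) \<le> (\<integral>\<^sup>+ \<omega>. ennreal (1 / N) * ennreal (\<Phi> (\<bar>X \<omega>\<bar> / c)) \<partial>M)"
    unfolding orlicz_modular_def
  proof (rule nn_integral_mono)
    fix \<omega>
    have "\<Phi> (\<bar>X \<omega>\<bar> / (N * c)) = \<Phi> ((1 / N) * (\<bar>X \<omega>\<bar> / c))" by simp
    also have "\<dots> \<le> (1 / N) * \<Phi> (\<bar>X \<omega>\<bar> / c)"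
      using assms by (intro orlicz_function_scale_le[OF \<Phi>]) auto
    finally have "ennreal (\<Phi> (\<bar>X \<omega>\<bar> / (N * c))) \<le> ennreal ((1 / N) * \<Phi> (\<bar>X \<omega>\<bar> / c))"
      by (rule ennreal_leI)
    also have "\<dots> = ennreal (1 / N) * ennreal (\<Phi> (\<bar>X \<omega>\<bar> / c))"
      using assms orlicz_function_nonneg[OF \<Phi>] by (intro ennreal_mult) auto
    finally show "ennreal (\<Phi> (\<bar>X \<omega>\<bar> / (N * c))) \<le> ennreal (1 / N) * ennreal (\<Phi> (\<bar>X \<omega>\<bar> / c))" .
  qed
  also have "\<dots> = ennreal (1 / N) * orlicz_modular M \<Phi> X c"
    unfolding orlicz_modular_def using assms
    by (intro nn_integral_cmult orlicz_function_measurable(2)[OF \<Phi>]) auto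
  finally show ?thesis .
qed

lemma orlicz_space_iff_modular_finite:
  assumes \<Phi>: "orlicz_function \<Phi>"
  shows "X \<in> orlicz_space M \<Phi> \<longleftrightarrow>
    X \<in> borel_measurable M \<and> (\<exists>c>0. orlicz_modular M \<Phi> X c < \<infinity>)"
proof
  assume "X \<in> orlicz_space M \<Phi>"
  then show "X \<in> borel_measurable M \<and> (\<exists>c>0. orlicz_modular M \<Phi> X c < \<infinity>)"
    using order.strict_trans1[OF _ ennreal_one_less_top]
    by (fastforce simp: orlicz_space_def mem_orlicz_set_iff)
next
  assume "X \<in> borel_measurable M \<and> (\<exists>c>0. orlicz_modular M \<Phi> X c < \<infinity>)"
  then obtain c m where X: "X \<in> borel_measurable M" and c: "0 < c"
    and m: "orlicz_modular M \<Phi> X c = ennreal m" "0 \<le> m"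
    using less_top_ennreal by auto
  define N where "N = max 1 m"
  have "orlicz_modular M \<Phi> X (N * c) \<le> ennreal (1 / N) * ennreal m"
    using orlicz_modular_dilate[OF \<Phi> X c, of N] m by (simp add: N_def)
  also have "\<dots> = ennreal (m / N)"
    using m by (simp add: N_def ennreal_mult[symmetric])
  also have "\<dots> \<le> 1"
    using m by (simp add: N_def)
  finally have "N * c \<in> orlicz_set M \<Phi> X"
    using c by (simp add: mem_orlicz_set_iff N_def)
  with X show "X \<in> orlicz_space M \<Phi>" by (auto simp: orlicz_space_def)
qed

lemma orlicz_space_diff:
  assumes \<Phi>: "orlicz_function \<Phi>" and "X \<in> orlicz_space M \<Phi>" "Y \<in> orlicz_space M \<Phi>"
  shows "(\<lambda>\<omega>. X \<omega> - Y \<omega>) \<in> orlicz_space M \<Phi>"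
proof -
  obtain a b where X: "X \<in> borel_measurable M" "0 < a" "orlicz_modular M \<Phi> X a < \<infinity>"
    and Y: "Y \<in> borel_measurable M" "0 < b" "orlicz_modular M \<Phi> Y b < \<infinity>"
    using assms(2,3) by (auto simp: orlicz_space_iff_modular_finite[OF \<Phi>])
  define c where "c = max a b"
  have c: "0 < c" "a \<le> c" "b \<le> c" using X Y by (auto simp: c_def)
  have "\<bar>X \<omega> - Y \<omega>\<bar> / (2 * c) \<le> max (\<bar>X \<omega>\<bar> / a) (\<bar>Y \<omega>\<bar> / b)" for \<omega>
  proof -
    have "\<bar>X \<omega> - Y \<omega>\<bar> \<le> 2 * max \<bar>X \<omega>\<bar> \<bar>Y \<omega>\<bar>"
      using abs_triangle_ineq4[of "X \<omega>" "Y \<omega>"] by linarith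
    then have "\<bar>X \<omega> - Y \<omega>\<bar> / (2 * c) \<le> max \<bar>X \<omega>\<bar> \<bar>Y \<omega>\<bar> / c"
      using c by (simp add: divide_le_eq)
    also have "\<dots> = max (\<bar>X \<omega>\<bar> / c) (\<bar>Y \<omega>\<bar> / c)"
      using c by (simp add: max_divide_distrib_right)
    also have "\<dots> \<le> max (\<bar>X \<omega>\<bar> / a) (\<bar>Y \<omega>\<bar> / b)"
      using X Y c by (intro max.mono divide_left_mono) auto
    finally show ?thesis .
  qed
  then have "orlicz_modular M \<Phi> (\<lambda>\<omega>. X \<omega> - Y \<omega>) (2 * c)
      \<le> orlicz_modular M \<Phi> X a + orlicz_modular M \<Phi> Y b"
    using X Y c by (intro orlicz_modular_le_add[OF \<Phi> X(1) Y(1)]) auto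
  also have "\<dots> < \<infinity>" using X Y by (simp add: ennreal_add_less_top)
  finally have "orlicz_modular M \<Phi> (\<lambda>\<omega>. X \<omega> - Y \<omega>) (2 * c) < \<infinity>" .
  with X Y show ?thesis
    by (auto simp: orlicz_space_iff_modular_finite[OF \<Phi>] c_def intro!: exI[of _ "2 * c"])
qed

lemma orlicz_norm_le:
  assumes "c \<in> orlicz_set M \<Phi> X"
  shows "0 \<le> orlicz_norm M \<Phi> X" "orlicz_norm M \<Phi> X \<le> c"
proof -
  have "bdd_below (orlicz_set M \<Phi> X)"
    by (rule bdd_belowI[of _ 0]) (simp add: orlicz_set_def)
  with assms show "orlicz_norm M \<Phi> X \<le> c" unfolding orlicz_norm_def by (rule cInf_lower)
  show "0 \<le> orlicz_norm M \<Phi> X" unfolding orlicz_norm_def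
    using assms by (intro cInf_greatest) (auto simp: orlicz_set_def)
qed

lemma orlicz_norm_lessE:
  assumes "X \<in> orlicz_space M \<Phi>" "orlicz_norm M \<Phi> X < c"
  obtains d where "d \<in> orlicz_set M \<Phi> X" "d < c"
  using cInf_lessD assms unfolding orlicz_space_def orlicz_norm_def by blast

section \<open>The Orlicz heart\<close>

definition orlicz_heart :: "'a measure \<Rightarrow> (real \<Rightarrow> real) \<Rightarrow> ('a \<Rightarrow> real) set" where
  "orlicz_heart M \<Phi> = {X \<in> borel_measurable M. \<forall>c>0. orlicz_modular M \<Phi> X c < \<infinity>}"

lemma orlicz_heart_subset_orlicz_space:
  assumes "orlicz_function \<Phi>"
  shows "orlicz_heart M \<Phi> \<subseteq> orlicz_space M \<Phi>"
proof
  fix X assume "X \<in> orlicz_heart M \<Phi>"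
  then have "X \<in> borel_measurable M" "orlicz_modular M \<Phi> X 1 < \<infinity>"
    by (auto simp: orlicz_heart_def)
  then show "X \<in> orlicz_space M \<Phi>"
    using orlicz_space_iff_modular_finite[OF assms] zero_less_one by blast
qed

lemma orlicz_heart_convex_combination:
  assumes \<Phi>: "orlicz_function \<Phi>" and X: "X \<in> orlicz_heart M \<Phi>" and Y: "Y \<in> orlicz_heart M \<Phi>"
    and t: "0 \<le> t" "t \<le> 1"
  shows "(\<lambda>\<omega>. t * X \<omega> + (1 - t) * Y \<omega>) \<in> orlicz_heart M \<Phi>"
proof -
  have meas: "X \<in> borel_measurable M" "Y \<in> borel_measurable M"
    using X Y by (auto simp: orlicz_heart_def)
  have "orlicz_modular M \<Phi> (\<lambda>\<omega>. t * X \<omega> + (1 - t) * Y \<omega>) c < \<infinity>" if c: "0 < c" for c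
  proof -
    have "\<bar>t * X \<omega> + (1 - t) * Y \<omega>\<bar> / c \<le> max (\<bar>X \<omega>\<bar> / c) (\<bar>Y \<omega>\<bar> / c)" for \<omega>
    proof -
      have "\<bar>t * X \<omega> + (1 - t) * Y \<omega>\<bar> \<le> t * \<bar>X \<omega>\<bar> + (1 - t) * \<bar>Y \<omega>\<bar>"
        using t abs_triangle_ineq[of "t * X \<omega>" "(1 - t) * Y \<omega>"] by (simp add: abs_mult)
      also have "\<dots> \<le> max \<bar>X \<omega>\<bar> \<bar>Y \<omega>\<bar>"
        using t convex_bound_le[of "\<bar>X \<omega>\<bar>" "max \<bar>X \<omega>\<bar> \<bar>Y \<omega>\<bar>" "\<bar>Y \<omega>\<bar>" t "1 - t"] by simp
      finally have "\<bar>t * X \<omega> + (1 - t) * Y \<omega>\<bar> / c \<le> max \<bar>X \<omega>\<bar> \<bar>Y \<omega>\<bar> / c"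
        using c by (intro divide_right_mono) auto
      then show ?thesis using c by (simp add: max_divide_distrib_right)
    qed
    then have "orlicz_modular M \<Phi> (\<lambda>\<omega>. t * X \<omega> + (1 - t) * Y \<omega>) c
        \<le> orlicz_modular M \<Phi> X c + orlicz_modular M \<Phi> Y c"
      using c by (intro orlicz_modular_le_add[OF \<Phi> meas]) auto
    also have "\<dots> < \<infinity>" using X Y c by (simp add: orlicz_heart_def ennreal_add_less_top)
    finally show ?thesis .
  qed
  with meas show ?thesis by (simp add: orlicz_heart_def)
qed

lemma orlicz_modular_distr:
  assumes "orlicz_function \<Phi>" "X \<in> borel_measurable M" "0 \<le> c"
  shows "orlicz_modular M \<Phi> X c = (\<integral>\<^sup>+ x. ennreal (\<Phi> (\<bar>x\<bar> / c)) \<partial>distr M borel X)"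
  unfolding orlicz_modular_def
  using assms by (intro nn_integral_distr[symmetric] orlicz_function_measurable(2)) auto

lemma orlicz_heart_law_invariant:
  assumes "orlicz_function \<Phi>" "X \<in> borel_measurable M" "Y \<in> borel_measurable M"
    and "distr M borel X = distr M borel Y"
  shows "X \<in> orlicz_heart M \<Phi> \<longleftrightarrow> Y \<in> orlicz_heart M \<Phi>"
  using assms by (simp add: orlicz_heart_def orlicz_modular_distr)

lemma orlicz_heart_bounded:
  assumes \<Phi>: "orlicz_function \<Phi>" and "finite_measure M" "X \<in> borel_measurable M" "\<And>\<omega>. \<bar>X \<omega>\<bar> \<le> B"
  shows "X \<in> orlicz_heart M \<Phi>"
proof -
  have "orlicz_modular M \<Phi> X c < \<infinity>" if c: "0 < c" for c
  proof -
    have "orlicz_modular M \<Phi> X c \<le> orlicz_modular M \<Phi> (\<lambda>_. B) c"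
      using assms(4) c abs_ge_self[of B]
      by (intro orlicz_modular_mono[OF \<Phi>] divide_right_mono) (auto intro: order.trans)
    also have "\<dots> = ennreal (\<Phi> (\<bar>B\<bar> / c)) * emeasure M (space M)"
      by (simp add: orlicz_modular_def)
    also have "\<dots> < \<infinity>"
      using finite_measure.emeasure_finite[OF assms(2)] by (simp add: ennreal_mult_less_top less_top)
    finally show ?thesis .
  qed
  with assms(3) show ?thesis by (simp add: orlicz_heart_def)
qed

lemma orlicz_heart_closed:
  assumes \<Phi>: "orlicz_function \<Phi>" and Xs: "\<And>n. Xs n \<in> orlicz_space M \<Phi>"
    and X: "X \<in> orlicz_space M \<Phi>" "X \<notin> orlicz_heart M \<Phi>"
    and lim: "(\<lambda>n. orlicz_norm M \<Phi> (\<lambda>\<omega>. Xs n \<omega> - X \<omega>)) \<longlonglongrightarrow> 0"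
  shows "eventually (\<lambda>n. Xs n \<notin> orlicz_heart M \<Phi>) sequentially"
proof -
  obtain c where c: "0 < c" and "\<not> orlicz_modular M \<Phi> X c < \<infinity>"
    using X by (auto simp: orlicz_heart_def orlicz_space_def)
  then have inf: "orlicz_modular M \<Phi> X c = \<infinity>" by (simp add: less_top[symmetric])
  have "eventually (\<lambda>n. orlicz_norm M \<Phi> (\<lambda>\<omega>. Xs n \<omega> - X \<omega>) < c / 2) sequentially"
    using order_tendstoD(2)[OF lim, of "c / 2"] c by simp
  then show ?thesis
  proof eventually_elim
    case (elim n)
    show ?case
    proof
      assume heart: "Xs n \<in> orlicz_heart M \<Phi>"
      define Z where "Z = (\<lambda>\<omega>. Xs n \<omega> - X \<omega>)"
      have Z: "Z \<in> orlicz_space M \<Phi>"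
        unfolding Z_def using orlicz_space_diff[OF \<Phi> Xs X(1)] .
      obtain d where d: "d \<in> orlicz_set M \<Phi> Z" "d < c / 2"
        using orlicz_norm_lessE[OF Z] elim unfolding Z_def by blast
      then have d0: "0 < d" "orlicz_modular M \<Phi> Z d \<le> 1" by (auto simp: mem_orlicz_set_iff)
      have "\<bar>X \<omega>\<bar> / c \<le> max (\<bar>Xs n \<omega>\<bar> / (c / 2)) (\<bar>Z \<omega>\<bar> / d)" for \<omega>
      proof -
        have "\<bar>X \<omega>\<bar> \<le> \<bar>Xs n \<omega>\<bar> + \<bar>Z \<omega>\<bar>"
          unfolding Z_def by arith
        also have "\<dots> \<le> 2 * max \<bar>Xs n \<omega>\<bar> \<bar>Z \<omega>\<bar>" by linarith
        finally have "\<bar>X \<omega>\<bar> / c \<le> max \<bar>Xs n \<omega>\<bar> \<bar>Z \<omega>\<bar> / (c / 2)"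
          using c by (simp add: field_simps)
        also have "\<dots> = max (\<bar>Xs n \<omega>\<bar> / (c / 2)) (\<bar>Z \<omega>\<bar> / (c / 2))"
          by (subst max_divide_distrib_right) (use c in simp)
        also have "\<dots> \<le> max (\<bar>Xs n \<omega>\<bar> / (c / 2)) (\<bar>Z \<omega>\<bar> / d)"
          using d d0 by (intro max.mono divide_left_mono) auto
        finally show ?thesis .
      qed
      then have "orlicz_modular M \<Phi> X c \<le> orlicz_modular M \<Phi> (Xs n) (c / 2) + orlicz_modular M \<Phi> Z d"
        using c d0 Xs Z
        by (intro orlicz_modular_le_add[OF \<Phi>]) (auto simp: orlicz_space_def)
      also have "\<dots> < \<infinity>"
        using heart c d0 by (simp add: orlicz_heart_def ennreal_add_less_top order.strict_trans1)
      finally show False using inf by simp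
    qed
  qed
qed

lemma delta2_orlicz_modular_half_finite:
  assumes \<Phi>: "orlicz_function \<Phi>" and "Delta2 \<Phi>" "finite_measure M"
    and X: "X \<in> borel_measurable M" and c: "0 < c" and fin: "orlicz_modular M \<Phi> X c < \<infinity>"
  shows "orlicz_modular M \<Phi> X (c / 2) < \<infinity>"
proof -
  obtain k C where k: "0 \<le> k" and C: "\<And>s. 0 \<le> s \<Longrightarrow> \<Phi> (2 * s) \<le> k * \<Phi> s + C"
    using delta2_doubling_bound[OF \<Phi> assms(2)] by blast
  have "orlicz_modular M \<Phi> X (c / 2)
      \<le> (\<integral>\<^sup>+ \<omega>. ennreal k * ennreal (\<Phi> (\<bar>X \<omega>\<bar> / c)) + ennreal (max 0 C) \<partial>M)"
    unfolding orlicz_modular_def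
  proof (rule nn_integral_mono)
    fix \<omega>
    have "\<Phi> (\<bar>X \<omega>\<bar> / (c / 2)) = \<Phi> (2 * (\<bar>X \<omega>\<bar> / c))" by (simp add: ac_simps)
    also have "\<dots> \<le> k * \<Phi> (\<bar>X \<omega>\<bar> / c) + max 0 C"
      using C[of "\<bar>X \<omega>\<bar> / c"] c by auto
    finally have "ennreal (\<Phi> (\<bar>X \<omega>\<bar> / (c / 2)))
        \<le> ennreal (k * \<Phi> (\<bar>X \<omega>\<bar> / c) + max 0 C)"
      by (rule ennreal_leI)
    also have "\<dots> = ennreal k * ennreal (\<Phi> (\<bar>X \<omega>\<bar> / c)) + ennreal (max 0 C)"
      using k c orlicz_function_nonneg[OF \<Phi>, of "\<bar>X \<omega>\<bar> / c"]
      by (simp add: ennreal_plus ennreal_mult del: max.absorb_iff2)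
    finally show "ennreal (\<Phi> (\<bar>X \<omega>\<bar> / (c / 2)))
        \<le> ennreal k * ennreal (\<Phi> (\<bar>X \<omega>\<bar> / c)) + ennreal (max 0 C)" .
  qed
  also have "\<dots> = ennreal k * orlicz_modular M \<Phi> X c + ennreal (max 0 C) * emeasure M (space M)"
    unfolding orlicz_modular_def using orlicz_function_measurable(2)[OF \<Phi> X, of c] c
    by (subst nn_integral_add) (auto simp: nn_integral_cmult)
  also have "\<dots> < \<infinity>"
    using fin finite_measure.emeasure_finite[OF assms(3)]
    by (simp add: ennreal_add_less_top ennreal_mult_less_top less_top)
  finally show ?thesis .
qed

lemma delta2_orlicz_space_subset_heart:
  assumes \<Phi>: "orlicz_function \<Phi>" and "Delta2 \<Phi>" "finite_measure M"
  shows "orlicz_space M \<Phi> \<subseteq> orlicz_heart M \<Phi>"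
proof
  fix X assume "X \<in> orlicz_space M \<Phi>"
  then obtain c where X: "X \<in> borel_measurable M" and c: "0 < c" "orlicz_modular M \<Phi> X c < \<infinity>"
    by (auto simp: orlicz_space_iff_modular_finite[OF \<Phi>])
  have halves: "orlicz_modular M \<Phi> X (c / 2 ^ n) < \<infinity>" for n
  proof (induction n)
    case (Suc n)
    from delta2_orlicz_modular_half_finite[OF \<Phi> assms(2,3) X _ Suc] c(1)
    show ?case by (simp add: field_simps)
  qed (use c in simp)
  have "orlicz_modular M \<Phi> X d < \<infinity>" if d: "0 < d" for d
  proof -
    obtain n where "c / d < 2 ^ n" using real_arch_pow[of 2 "c / d"] by auto
    then have "c / 2 ^ n \<le> d" using d by (simp add: field_simps)
    then have "orlicz_modular M \<Phi> X d \<le> orlicz_modular M \<Phi> X (c / 2 ^ n)"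
      using c d by (intro orlicz_modular_mono[OF \<Phi>] divide_left_mono) auto
    then show ?thesis using halves[of n] by (rule order.strict_trans1)
  qed
  with X show "X \<in> orlicz_heart M \<Phi>" by (simp add: orlicz_heart_def)
qed

section \<open>Sufficiency of the \<open>\<Delta>\<^sub>2\<close> condition\<close>

lemma orlicz_norm_tendsto_zeroI:
  assumes "\<And>c. 0 < c \<Longrightarrow> (\<lambda>n. orlicz_modular M \<Phi> (Z n) c) \<longlonglongrightarrow> 0"
  shows "(\<lambda>n. orlicz_norm M \<Phi> (Z n)) \<longlonglongrightarrow> 0"
proof (rule tendstoI)
  fix e :: real assume "0 < e"
  then have e: "0 < e / 2" by simp
  have "eventually (\<lambda>n. orlicz_modular M \<Phi> (Z n) (e / 2) < 1) sequentially"
    by (rule order_tendstoD[OF assms[OF e]]) simp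
  then have "eventually (\<lambda>n. e / 2 \<in> orlicz_set M \<Phi> (Z n)) sequentially"
    by eventually_elim (use e in \<open>simp add: mem_orlicz_set_iff less_imp_le\<close>)
  then show "eventually (\<lambda>n. dist (orlicz_norm M \<Phi> (Z n)) 0 < e) sequentially"
  proof eventually_elim
    case (elim n)
    from orlicz_norm_le[OF elim] e show ?case by (simp add: dist_real_def)
  qed
qed

lemma orlicz_modular_dominated_convergence:
  assumes \<Phi>: "orlicz_function \<Phi>" and c: "0 < c"
    and meas: "\<And>n. Xs n \<in> borel_measurable M" "X \<in> borel_measurable M"
    and Y: "Y \<in> orlicz_heart M \<Phi>"
    and lim: "AE \<omega> in M. (\<lambda>n. Xs n \<omega>) \<longlonglongrightarrow> X \<omega>"
    and bound: "\<forall>n. AE \<omega> in M. \<bar>Xs n \<omega>\<bar> \<le> Y \<omega>"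
  shows "(\<lambda>n. orlicz_modular M \<Phi> (\<lambda>\<omega>. Xs n \<omega> - X \<omega>) c) \<longlonglongrightarrow> 0"
proof -
  define u where "u n \<omega> = \<Phi> (\<bar>Xs n \<omega> - X \<omega>\<bar> / c)" for n \<omega>
  define w where "w \<omega> = \<Phi> (\<bar>Y \<omega>\<bar> / (c / 2))" for \<omega>
  have "orlicz_modular M \<Phi> Y (c / 2) < \<infinity>"
    using Y c by (simp add: orlicz_heart_def)
  then have w_finite: "(\<integral>\<^sup>+ \<omega>. ennreal (w \<omega>) \<partial>M) < \<infinity>"
    by (simp add: orlicz_modular_def w_def)
  have "AE \<omega> in M. \<forall>n. \<bar>Xs n \<omega>\<bar> \<le> Y \<omega>" using bound by (simp add: AE_all_countable)
  with lim have "AE \<omega> in M. \<forall>n. \<bar>Xs n \<omega>\<bar> \<le> Y \<omega> \<and> \<bar>X \<omega>\<bar> \<le> Y \<omega>"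
    by eventually_elim (auto intro: LIMSEQ_le_const2[OF tendsto_rabs])
  then have u_bound: "AE \<omega> in M. norm (u n \<omega>) \<le> w \<omega>" for n
  proof eventually_elim
    case (elim \<omega>)
    then have "\<bar>Xs n \<omega> - X \<omega>\<bar> \<le> 2 * \<bar>Y \<omega>\<bar>" by (smt (verit) spec[of _ n])
    then have "\<bar>Xs n \<omega> - X \<omega>\<bar> / c \<le> \<bar>Y \<omega>\<bar> / (c / 2)"
      using c by (simp add: field_simps)
    then show ?case
      using c orlicz_function_nonneg[OF \<Phi>] orlicz_function_mono[OF \<Phi>] by (simp add: u_def w_def)
  qed
  from lim have u_lim: "AE \<omega> in M. (\<lambda>n. u n \<omega>) \<longlonglongrightarrow> 0"
  proof eventually_elim
    case (elim \<omega>)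
    have "(\<lambda>n. \<bar>Xs n \<omega> - X \<omega>\<bar> / c) \<longlonglongrightarrow> \<bar>X \<omega> - X \<omega>\<bar> / c"
      using c by (intro tendsto_intros elim) simp
    then show ?case
      unfolding u_def using c by (intro orlicz_function_tendsto_zero[OF \<Phi>]) auto
  qed
  have "(\<lambda>n. \<integral>\<^sup>+ \<omega>. ennreal (norm (0 - u n \<omega>)) \<partial>M) \<longlonglongrightarrow> 0"
  proof (rule nn_integral_dominated_convergence_norm[OF _ _ _ u_bound w_finite u_lim])
    show "u n \<in> borel_measurable M" for n
      unfolding u_def using meas c by (intro orlicz_function_measurable(1)[OF \<Phi>]) auto
    show "w \<in> borel_measurable M"
      unfolding w_def using Y c by (intro orlicz_function_measurable(1)[OF \<Phi>]) (auto simp: orlicz_heart_def)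
  qed simp
  moreover have "norm (0 - u n \<omega>) = u n \<omega>" for n \<omega>
    using c orlicz_function_nonneg[OF \<Phi>] by (simp add: u_def)
  ultimately show ?thesis by (simp add: orlicz_modular_def u_def)
qed

lemma delta2_orlicz_norm_dominated_convergence:
  assumes \<Phi>: "orlicz_function \<Phi>" and "Delta2 \<Phi>" "finite_measure M"
    and Xs: "\<And>n. Xs n \<in> orlicz_space M \<Phi>" and X: "X \<in> orlicz_space M \<Phi>"
    and Y: "Y \<in> orlicz_space M \<Phi>"
    and lim: "AE \<omega> in M. (\<lambda>n. Xs n \<omega>) \<longlonglongrightarrow> X \<omega>"
    and bound: "\<forall>n. AE \<omega> in M. \<bar>Xs n \<omega>\<bar> \<le> Y \<omega>"
  shows "(\<lambda>n. orlicz_norm M \<Phi> (\<lambda>\<omega>. Xs n \<omega> - X \<omega>)) \<longlonglongrightarrow> 0"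
proof (rule orlicz_norm_tendsto_zeroI)
  have "Y \<in> orlicz_heart M \<Phi>"
    using delta2_orlicz_space_subset_heart[OF \<Phi> assms(2,3)] Y by blast
  with Xs X lim bound show "(\<lambda>n. orlicz_modular M \<Phi> (\<lambda>\<omega>. Xs n \<omega> - X \<omega>) c) \<longlonglongrightarrow> 0"
    if "0 < c" for c
    using that by (intro orlicz_modular_dominated_convergence[OF \<Phi>]) (auto simp: orlicz_space_def)
qed

lemma delta2_fatou_property:
  assumes "orlicz_function \<Phi>" "Delta2 \<Phi>" "finite_measure M" "norm_lsc M \<Phi> \<rho>"
  shows "fatou_property M \<Phi> \<rho>"
  using assms delta2_orlicz_norm_dominated_convergence[OF assms(1-3)]
  unfolding fatou_property_def norm_lsc_def by blast

definition orlicz_heart_indicator :: "'a measure \<Rightarrow> (real \<Rightarrow> real) \<Rightarrow> ('a \<Rightarrow> real) \<Rightarrow> ereal" where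
  "orlicz_heart_indicator M \<Phi> X = (if X \<in> orlicz_heart M \<Phi> then 0 else \<infinity>)"

lemma orlicz_heart_indicator_proper:
  assumes "orlicz_function \<Phi>"
  shows "proper_on (orlicz_space M \<Phi>) (orlicz_heart_indicator M \<Phi>)"
proof -
  have "(\<lambda>_. 0) \<in> orlicz_heart M \<Phi>"
    using assms by (simp add: orlicz_heart_def orlicz_modular_def orlicz_function_def)
  with orlicz_heart_subset_orlicz_space[OF assms] show ?thesis
    unfolding proper_on_def orlicz_heart_indicator_def by force
qed

lemma orlicz_heart_indicator_convex:
  assumes "orlicz_function \<Phi>"
  shows "convex_functional (orlicz_space M \<Phi>) (orlicz_heart_indicator M \<Phi>)"
  using orlicz_heart_convex_combination[OF assms]
  by (fastforce simp: convex_functional_def orlicz_heart_indicator_def)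

lemma orlicz_heart_indicator_quasiconvex:
  assumes "orlicz_function \<Phi>"
  shows "quasiconvex_functional (orlicz_space M \<Phi>) (orlicz_heart_indicator M \<Phi>)"
  using orlicz_heart_convex_combination[OF assms]
  by (fastforce simp: quasiconvex_functional_def orlicz_heart_indicator_def split: if_splits)

lemma orlicz_heart_indicator_law_invariant:
  assumes "orlicz_function \<Phi>"
  shows "law_invariant M (orlicz_space M \<Phi>) (orlicz_heart_indicator M \<Phi>)"
  using orlicz_heart_law_invariant[OF assms]
  by (auto simp: law_invariant_def orlicz_heart_indicator_def orlicz_space_def)

lemma orlicz_heart_indicator_norm_lsc:
  assumes "orlicz_function \<Phi>"
  shows "norm_lsc M \<Phi> (orlicz_heart_indicator M \<Phi>)"
  unfolding norm_lsc_def
proof (intro allI impI)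
  fix Xs X
  assume Xs: "\<forall>n. Xs n \<in> orlicz_space M \<Phi>" and X: "X \<in> orlicz_space M \<Phi>"
    and lim: "(\<lambda>n. orlicz_norm M \<Phi> (\<lambda>\<omega>. Xs n \<omega> - X \<omega>)) \<longlonglongrightarrow> 0"
  show "orlicz_heart_indicator M \<Phi> X \<le> liminf (\<lambda>n. orlicz_heart_indicator M \<Phi> (Xs n))"
  proof (cases "X \<in> orlicz_heart M \<Phi>")
    case True
    then show ?thesis
      by (simp add: orlicz_heart_indicator_def Liminf_bounded)
  next
    case False
    have "eventually (\<lambda>n. orlicz_heart_indicator M \<Phi> (Xs n) = \<infinity>) sequentially"
      using orlicz_heart_closed[OF assms _ X False lim] Xs
      by (simp add: orlicz_heart_indicator_def)
    then have "\<infinity> \<le> liminf (\<lambda>n. orlicz_heart_indicator M \<Phi> (Xs n))"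
      unfolding le_Liminf_iff by (auto elim: eventually_mono)
    then show ?thesis by simp
  qed
qed

lemma orlicz_heart_indicator_not_fatou:
  assumes \<Phi>: "orlicz_function \<Phi>" and "finite_measure M"
    and X: "X \<in> orlicz_space M \<Phi>" "X \<notin> orlicz_heart M \<Phi>"
  shows "\<not> fatou_property M \<Phi> (orlicz_heart_indicator M \<Phi>)"
proof
  assume fatou: "fatou_property M \<Phi> (orlicz_heart_indicator M \<Phi>)"
  define Xs where "Xs n \<omega> = (if \<bar>X \<omega>\<bar> \<le> real n then X \<omega> else 0)" for n \<omega>
  have X_meas: "X \<in> borel_measurable M" using X by (simp add: orlicz_space_def)
  then have Xs_heart: "Xs n \<in> orlicz_heart M \<Phi>" for n
    unfolding Xs_def by (intro orlicz_heart_bounded[OF \<Phi> assms(2), of _ "real n"]) auto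
  then have Xs_space: "Xs n \<in> orlicz_space M \<Phi>" for n
    using orlicz_heart_subset_orlicz_space[OF \<Phi>] by blast
  have abs_space: "(\<lambda>\<omega>. \<bar>X \<omega>\<bar>) \<in> orlicz_space M \<Phi>"
    using X X_meas by (simp add: orlicz_space_def orlicz_set_def)
  have "(\<lambda>n. Xs n \<omega>) \<longlonglongrightarrow> X \<omega>" for \<omega>
  proof (rule tendsto_eventually)
    obtain N :: nat where "\<bar>X \<omega>\<bar> \<le> real N" using real_arch_simple by blast
    then show "eventually (\<lambda>n. Xs n \<omega> = X \<omega>) sequentially"
      unfolding eventually_sequentially Xs_def by (intro exI[of _ N]) auto
  qed
  moreover have "\<bar>Xs n \<omega>\<bar> \<le> \<bar>X \<omega>\<bar>" for n \<omega> by (simp add: Xs_def)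
  ultimately have "orlicz_heart_indicator M \<Phi> X \<le> liminf (\<lambda>n. orlicz_heart_indicator M \<Phi> (Xs n))"
    using fatou Xs_space X(1) abs_space unfolding fatou_property_def by blast
  then show False
    using X(2) Xs_heart by (simp add: orlicz_heart_indicator_def Liminf_const)
qed

section \<open>Nonatomic measures\<close>

context finite_measure
begin

lemma nonatomic_small_subset:
  assumes na: "nonatomic M" and A: "A \<in> sets M" "0 < measure M A" and e: "0 < e"
  obtains B where "B \<in> sets M" "B \<subseteq> A" "0 < measure M B" "measure M B \<le> e"
proof -
  have "\<exists>B\<in>sets M. B \<subseteq> A \<and> 0 < measure M B \<and> measure M B \<le> measure M A / 2 ^ n" for n
  proof (induction n)
    case (Suc n)
    then obtain B where B: "B \<in> sets M" "B \<subseteq> A" "0 < measure M B" "measure M B \<le> measure M A / 2 ^ n"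
      by blast
    obtain C where C: "C \<in> sets M" "C \<subseteq> B" "0 < measure M C" "measure M C < measure M B"
      using na B(1,3) unfolding nonatomic_def by blast
    show ?case
    proof (cases "measure M C \<le> measure M B / 2")
      case True
      with B C show ?thesis by (intro bexI[of _ C]) auto
    next
      case False
      have "measure M (B - C) = measure M B - measure M C"
        using B C by (intro finite_measure_Diff) auto
      with B C False show ?thesis by (intro bexI[of _ "B - C"]) auto
    qed
  qed (use A in auto)
  moreover obtain n where "measure M A / e < 2 ^ n"
    using real_arch_pow[of 2 "measure M A / e"] by auto
  then have "measure M A / 2 ^ n \<le> e" using e by (simp add: field_simps)
  ultimately show ?thesis using that by (meson order.trans)
qed

lemma greedy_subset_step:
  assumes S: "S \<in> sets M" "measure M S \<le> q"
  obtains C where "C \<in> sets M" "C \<subseteq> A - S" "measure M S + measure M C \<le> q"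
    "\<And>D. D \<in> sets M \<Longrightarrow> D \<subseteq> A - S \<Longrightarrow> measure M S + measure M D \<le> q \<Longrightarrow> measure M D \<le> 2 * measure M C"
proof -
  define cand where "cand = {measure M D | D. D \<in> sets M \<and> D \<subseteq> A - S \<and> measure M S + measure M D \<le> q}"
  have ne: "cand \<noteq> {}" using S unfolding cand_def by (auto intro!: exI[of _ "{}"])
  have bdd: "bdd_above cand"
    unfolding cand_def by (rule bdd_aboveI[of _ q]) (use measure_nonneg[of M S] in \<open>auto simp del: measure_nonneg\<close>)
  show ?thesis
  proof (cases "Sup cand \<le> 0")
    case True
    then have "measure M D \<le> 0" if "D \<in> sets M" "D \<subseteq> A - S" "measure M S + measure M D \<le> q" for D
    proof -
      have "measure M D \<in> cand" using that unfolding cand_def by blast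
      from cSup_upper[OF this bdd] True show ?thesis by simp
    qed
    with S show ?thesis by (intro that[of "{}"]) auto
  next
    case False
    then have "Sup cand / 2 < Sup cand" by simp
    then obtain x where "x \<in> cand" "Sup cand / 2 < x" using less_cSup_iff[OF ne bdd] by blast
    then obtain C where C: "C \<in> sets M" "C \<subseteq> A - S" "measure M S + measure M C \<le> q"
      "Sup cand / 2 < measure M C" unfolding cand_def by blast
    show ?thesis
    proof (rule that[OF C(1-3)])
      fix D assume "D \<in> sets M" "D \<subseteq> A - S" "measure M S + measure M D \<le> q"
      then have "measure M D \<le> Sup cand" by (intro cSup_upper[OF _ bdd]) (auto simp: cand_def)
      with C(4) show "measure M D \<le> 2 * measure M C" by simp
    qed
  qed
qed

lemma greedy_exhaustion:
  assumes "0 \<le> q"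
  obtains B C where "\<And>k. B k \<in> sets M" "\<And>k. B k \<subseteq> A" "\<And>k. measure M (B k) \<le> q"
    "\<And>k. B (Suc k) = B k \<union> C k" "\<And>k. measure M (B (Suc k)) = measure M (B k) + measure M (C k)"
    "\<And>k D. D \<in> sets M \<Longrightarrow> D \<subseteq> A - B k \<Longrightarrow> measure M (B k) + measure M D \<le> q \<Longrightarrow>
      measure M D \<le> 2 * measure M (C k)"
proof -
  define admissible where "admissible S \<longleftrightarrow> S \<in> sets M \<and> S \<subseteq> A \<and> measure M S \<le> q" for S
  define good where "good S C \<longleftrightarrow> C \<in> sets M \<and> C \<subseteq> A - S \<and> measure M S + measure M C \<le> q \<and>
    (\<forall>D\<in>sets M. D \<subseteq> A - S \<and> measure M S + measure M D \<le> q \<longrightarrow> measure M D \<le> 2 * measure M C)" for S C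
  have "\<forall>S. \<exists>C. admissible S \<longrightarrow> good S C"
    using greedy_subset_step unfolding admissible_def good_def by metis
  then obtain step where step: "\<And>S. admissible S \<Longrightarrow> good S (step S)" by metis
  define B where "B k = ((\<lambda>S. S \<union> step S) ^^ k) {}" for k
  have B_Suc: "B (Suc k) = B k \<union> step (B k)" for k by (simp add: B_def)
  have union: "measure M (S \<union> step S) = measure M S + measure M (step S)" if "admissible S" for S
    using step[OF that] that by (intro finite_measure_Union) (auto simp: good_def admissible_def)
  have adm: "admissible (B k)" for k
  proof (induction k)
    case 0
    show ?case using assms by (simp add: B_def admissible_def)
  next
    case (Suc k)
    then have "B k \<in> sets M" "B k \<subseteq> A" and good: "good (B k) (step (B k))"
      using step by (auto simp: admissible_def)
    with union[OF Suc] show ?case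
      unfolding B_Suc admissible_def good_def by auto
  qed
  then have "measure M (B (Suc k)) = measure M (B k) + measure M (step (B k))" for k
    unfolding B_Suc by (rule union)
  with adm step show ?thesis
    by (intro that[of B "\<lambda>k. step (B k)"]) (auto simp: admissible_def good_def B_Suc)
qed

lemma nonatomic_exact_subset:
  assumes na: "nonatomic M" and A: "A \<in> sets M" and q: "0 \<le> q" "q \<le> measure M A"
  obtains B where "B \<in> sets M" "B \<subseteq> A" "measure M B = q"
proof -
  obtain B C where B: "\<And>k. B k \<in> sets M" "\<And>k. B k \<subseteq> A" "\<And>k. measure M (B k) \<le> q"
    and B_Suc: "\<And>k. B (Suc k) = B k \<union> C k"
    and measure_Suc: "\<And>k. measure M (B (Suc k)) = measure M (B k) + measure M (C k)"
    and greedy: "\<And>k D. D \<in> sets M \<Longrightarrow> D \<subseteq> A - B k \<Longrightarrow> measure M (B k) + measure M D \<le> q \<Longrightarrow>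
      measure M D \<le> 2 * measure M (C k)"
    using greedy_exhaustion[OF q(1)] by blast
  define U where "U = (\<Union>k. B k)"
  have U: "U \<in> sets M" "U \<subseteq> A" using B by (auto simp: U_def)
  have lim: "(\<lambda>k. measure M (B k)) \<longlonglongrightarrow> measure M U"
    unfolding U_def using B(1) by (intro finite_Lim_measure_incseq) (auto simp: B_Suc intro: incseq_SucI)
  have "measure M U \<le> q"
    by (rule LIMSEQ_le_const2[OF lim]) (use B(3) in auto)
  have "(\<lambda>k. measure M (B (Suc k)) - measure M (B k)) \<longlonglongrightarrow> measure M U - measure M U"
    by (intro tendsto_diff lim LIMSEQ_Suc)
  then have C_lim: "(\<lambda>k. measure M (C k)) \<longlonglongrightarrow> 0" by (simp add: measure_Suc)
  have "measure M U = q"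
  proof (rule ccontr)
    assume "measure M U \<noteq> q"
    with \<open>measure M U \<le> q\<close> have "measure M U < q" by simp
    moreover have "measure M (A - U) = measure M A - measure M U"
      using U A by (intro finite_measure_Diff) auto
    ultimately obtain D where D: "D \<in> sets M" "D \<subseteq> A - U" "0 < measure M D" "measure M D \<le> q - measure M U"
      using nonatomic_small_subset[OF na, of "A - U" "q - measure M U"] A U q by auto
    have "measure M D \<le> 2 * measure M (C k)" for k
    proof (rule greedy[OF D(1)])
      show "D \<subseteq> A - B k" using D(2) by (auto simp: U_def)
      have "measure M (B k) \<le> measure M U"
        using U by (intro finite_measure_mono) (auto simp: U_def)
      with D(4) show "measure M (B k) + measure M D \<le> q" by linarith
    qed
    then have "measure M D \<le> 2 * 0"
      by (intro LIMSEQ_le_const[OF tendsto_mult_left[OF C_lim]]) auto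
    with D(3) show False by simp
  qed
  with U that show ?thesis by blast
qed

lemma nonatomic_disjoint_family_measures:
  assumes na: "nonatomic M" and r: "\<And>n. 0 \<le> r n" "summable r" "suminf r \<le> measure M (space M)"
  obtains A where "\<And>n. A n \<in> sets M" "disjoint_family A" "\<And>n. measure M (A n) = r n"
proof -
  have "\<forall>n S. \<exists>C. S \<in> sets M \<and> r n \<le> measure M (space M - S) \<longrightarrow>
      C \<in> sets M \<and> C \<subseteq> space M - S \<and> measure M C = r n"
    using nonatomic_exact_subset[OF na] r(1) by (metis sets.compl_sets)
  then obtain pick where pick: "\<And>n S. S \<in> sets M \<Longrightarrow> r n \<le> measure M (space M - S) \<Longrightarrow>
      pick n S \<in> sets M \<and> pick n S \<subseteq> space M - S \<and> measure M (pick n S) = r n"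
    by metis
  define D where "D = rec_nat {} (\<lambda>n S. S \<union> pick n S)"
  have D_Suc: "D (Suc n) = D n \<union> pick n (D n)" for n by (simp add: D_def)
  have D: "D n \<in> sets M \<and> measure M (D n) = (\<Sum>k<n. r k) \<and>
      pick n (D n) \<in> sets M \<and> pick n (D n) \<subseteq> space M - D n \<and> measure M (pick n (D n)) = r n" for n
  proof (induction n)
    case 0
    have "r 0 \<le> measure M (space M)" using sum_le_suminf[OF r(2), of "{0}"] r by auto
    then show ?case using pick[of "{}" 0] by (simp add: D_def)
  next
    case (Suc n)
    have D_Suc_sets: "D (Suc n) \<in> sets M" unfolding D_Suc using Suc by auto
    have "measure M (D (Suc n)) = measure M (D n) + measure M (pick n (D n))"
      unfolding D_Suc using Suc by (intro finite_measure_Union) auto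
    with Suc have D_Suc_measure: "measure M (D (Suc n)) = (\<Sum>k<Suc n. r k)" by simp
    have "(\<Sum>k<Suc (Suc n). r k) \<le> measure M (space M)"
      using sum_le_suminf[OF r(2), of "{..<Suc (Suc n)}"] r by auto
    then have "r (Suc n) \<le> measure M (space M - D (Suc n))"
      using D_Suc_sets D_Suc_measure by (simp add: finite_measure_compl)
    with pick[OF D_Suc_sets] D_Suc_sets D_Suc_measure show ?case by simp
  qed
  have D_mono: "D m \<subseteq> D n" if "m \<le> n" for m n
    using that by (induction n) (auto simp: D_Suc le_Suc_eq)
  have "disjoint_family (\<lambda>n. pick n (D n))"
    unfolding disjoint_family_on_def
  proof (intro ballI impI)
    have "pick m (D m) \<inter> pick n (D n) = {}" if "m < n" for m n
      using D_mono[of "Suc m" n] D[of n] that by (auto simp: D_Suc)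
    then show "pick m (D m) \<inter> pick n (D n) = {}" if "m \<noteq> n" for m n
      using that by (metis Int_commute linorder_neqE_nat)
  qed
  with D show ?thesis by (intro that[of "\<lambda>n. pick n (D n)"]) auto
qed

end

section \<open>Necessity of the \<open>\<Delta>\<^sub>2\<close> condition\<close>

lemma disjoint_family_indicator_single:
  fixes f :: "nat \<Rightarrow> 'b::semiring_1"
  assumes "disjoint_family A" "\<omega> \<in> A m"
  shows "(\<lambda>n. f n * indicator (A n) \<omega>) = (\<lambda>n. if n = m then f m else 0)"
  using assms by (auto simp: disjoint_family_on_def indicator_def fun_eq_iff)

lemma (in finite_measure) orlicz_modular_disjoint_step_function:
  assumes \<Phi>: "orlicz_function \<Phi>" and A: "\<And>n. A n \<in> sets M" "disjoint_family A"
    and t: "\<And>n. 0 \<le> t n" and c: "0 < c"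
  defines "X \<equiv> \<lambda>\<omega>. \<Sum>n. t n * indicator (A n) \<omega>"
  shows "X \<in> borel_measurable M"
    and "orlicz_modular M \<Phi> X c = (\<Sum>n. ennreal (\<Phi> (t n / c) * measure M (A n)))"
proof -
  note A_sets[measurable] = A(1)
  have pointwise: "(\<lambda>n. t n * indicator (A n) \<omega>) sums X \<omega> \<and>
      ennreal (\<Phi> (\<bar>X \<omega>\<bar> / c)) = (\<Sum>n. ennreal (\<Phi> (t n / c)) * indicator (A n) \<omega>)" for \<omega>
  proof (cases "\<exists>m. \<omega> \<in> A m")
    case True
    then obtain m where m: "\<omega> \<in> A m" by blast
    note single = disjoint_family_indicator_single[OF A(2) m]
    have "(\<lambda>n. t n * indicator (A n) \<omega>) sums t m"
      unfolding single by (rule sums_single)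
    moreover have "(\<Sum>n. if n = m then a else 0) = a" for a :: ennreal
      using sums_single[of m "\<lambda>_. a"] by (simp add: sums_iff)
    ultimately show ?thesis
      using t[of m] unfolding X_def single by (simp add: sums_iff)
  next
    case False
    with \<Phi> show ?thesis by (simp add: X_def orlicz_function_def)
  qed
  show "X \<in> borel_measurable M"
  proof (rule borel_measurable_LIMSEQ_real)
    show "(\<lambda>i. \<Sum>n<i. t n * indicator (A n) \<omega>) \<longlonglongrightarrow> X \<omega>" for \<omega>
      using pointwise[of \<omega>] by (simp add: sums_def)
  qed measurable
  have "orlicz_modular M \<Phi> X c = (\<integral>\<^sup>+ \<omega>. (\<Sum>n. ennreal (\<Phi> (t n / c)) * indicator (A n) \<omega>) \<partial>M)"
    unfolding orlicz_modular_def using pointwise by simp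
  also have "\<dots> = (\<Sum>n. \<integral>\<^sup>+ \<omega>. ennreal (\<Phi> (t n / c)) * indicator (A n) \<omega> \<partial>M)"
    by (intro nn_integral_suminf) measurable
  also have "\<dots> = (\<Sum>n. ennreal (\<Phi> (t n / c) * measure M (A n)))"
    using A(1) t c orlicz_function_nonneg[OF \<Phi>]
    by (simp add: nn_integral_cmult_indicator emeasure_eq_measure ennreal_mult)
  finally show "orlicz_modular M \<Phi> X c = (\<Sum>n. ennreal (\<Phi> (t n / c) * measure M (A n)))" .
qed

lemma not_delta2_disjoint_events:
  assumes \<Phi>: "orlicz_function \<Phi>" and "prob_space M" "nonatomic M" "\<not> Delta2 \<Phi>"
  obtains t A where "\<And>n. 0 \<le> t n" "\<And>n. A n \<in> sets M" "disjoint_family A"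
    "\<And>n. \<Phi> (t n) * measure M (A n) = (1 / 2) ^ Suc n" "\<And>n. 1 \<le> \<Phi> (2 * t n) * measure M (A n)"
proof -
  interpret prob_space M by fact
  obtain t where t: "\<And>n. 0 < t n" "\<And>n. 1 \<le> \<Phi> (t n)"
    and doubling: "\<And>n. 2 ^ Suc n * \<Phi> (t n) \<le> \<Phi> (2 * t n)"
    using not_delta2_doubling_sequence[OF \<Phi> assms(4)] by blast
  define r where "r n = 1 / (2 ^ Suc n * \<Phi> (t n))" for n
  have r_nonneg: "0 \<le> r n" for n
    using t(2)[of n] by (simp add: r_def)
  have r_le: "r n \<le> (1 / 2) ^ Suc n" for n
  proof -
    have "(2::real) ^ Suc n \<le> 2 ^ Suc n * \<Phi> (t n)" using t(2)[of n] by simp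
    then have "r n \<le> 1 / 2 ^ Suc n"
      unfolding r_def by (intro divide_left_mono) auto
    then show ?thesis by (simp add: power_one_over)
  qed
  have geom: "(\<lambda>n. (1 / 2 :: real) ^ Suc n) sums 1" by (rule power_half_series)
  have "summable r"
    using r_le r_nonneg by (intro summable_comparison_test'[OF sums_summable[OF geom]]) auto
  moreover have "suminf r \<le> measure M (space M)"
    using suminf_le[OF r_le \<open>summable r\<close> sums_summable[OF geom]] sums_unique[OF geom]
    by (simp add: prob_space)
  ultimately obtain A where A: "\<And>n. A n \<in> sets M" "disjoint_family A" "\<And>n. measure M (A n) = r n"
    by (rule nonatomic_disjoint_family_measures[OF assms(3) r_nonneg]) blast
  show ?thesis
  proof (rule that[of t A])
    show "0 \<le> t n" for n using t(1)[of n] by simp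
    show "\<Phi> (t n) * measure M (A n) = (1 / 2) ^ Suc n" for n
      using t(2)[of n] by (simp add: A(3) r_def power_divide)
    have "0 < 2 ^ Suc n * \<Phi> (t n)" for n using t(2)[of n] by simp
    then show "1 \<le> \<Phi> (2 * t n) * measure M (A n)" for n
      using doubling[of n] by (simp add: A(3) r_def le_divide_eq)
  qed (use A in auto)
qed

lemma not_delta2_orlicz_space_not_subset_heart:
  assumes \<Phi>: "orlicz_function \<Phi>" and "prob_space M" "nonatomic M" "\<not> Delta2 \<Phi>"
  obtains X where "X \<in> orlicz_space M \<Phi>" "X \<notin> orlicz_heart M \<Phi>"
proof -
  interpret prob_space M by fact
  obtain t A where t: "\<And>n. 0 \<le> t n" and A: "\<And>n. A n \<in> sets M" "disjoint_family A"
    and geometric: "\<And>n. \<Phi> (t n) * measure M (A n) = (1 / 2) ^ Suc n"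
    and large: "\<And>n. 1 \<le> \<Phi> (2 * t n) * measure M (A n)"
    using not_delta2_disjoint_events[OF assms] by blast
  define X where "X = (\<lambda>\<omega>. \<Sum>n. t n * indicator (A n) \<omega>)"
  note step = orlicz_modular_disjoint_step_function[OF \<Phi> A, where t = t, OF t, folded X_def]
  have "orlicz_modular M \<Phi> X 1 = (\<Sum>n. ennreal ((1 / 2) ^ Suc n))"
    unfolding step(2)[OF zero_less_one] by (simp only: div_by_1 geometric)
  also have "\<dots> = ennreal (\<Sum>n. (1 / 2) ^ Suc n)"
    by (rule suminf_ennreal2) (auto intro: sums_summable[OF power_half_series])
  also have "\<dots> = ennreal 1"
    using sums_unique[OF power_half_series] by simp
  finally have "X \<in> orlicz_space M \<Phi>"
    unfolding orlicz_space_iff_modular_finite[OF \<Phi>] using step(1)[OF zero_less_one]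
    by (intro conjI exI[of _ 1]) auto
  moreover have "orlicz_modular M \<Phi> X (1 / 2) = \<infinity>"
  proof -
    have "\<not> summable (\<lambda>n. \<Phi> (2 * t n) * measure M (A n))"
    proof
      assume "summable (\<lambda>n. \<Phi> (2 * t n) * measure M (A n))"
      then have "(\<lambda>n. \<Phi> (2 * t n) * measure M (A n)) \<longlonglongrightarrow> 0" by (rule summable_LIMSEQ_zero)
      from LIMSEQ_le_const[OF this, of 1] large show False by simp
    qed
    moreover have "0 \<le> \<Phi> (2 * t n) * measure M (A n)" for n using large[of n] by linarith
    ultimately have "(\<Sum>n. ennreal (\<Phi> (2 * t n) * measure M (A n))) = \<infinity>"
      using summable_iff_suminf_neq_top by simp
    moreover have "orlicz_modular M \<Phi> X (1 / 2) = (\<Sum>n. ennreal (\<Phi> (t n / (1 / 2)) * measure M (A n)))"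
      by (rule step(2)) simp
    moreover have "t n / (1 / 2) = 2 * t n" for n by simp
    ultimately show ?thesis by (simp only:)
  qed
  then have "X \<notin> orlicz_heart M \<Phi>"
    unfolding orlicz_heart_def by (auto intro!: exI[of _ "1 / 2"])
  ultimately show ?thesis by (rule that)
qed

theorem theorem2:
  fixes M :: "'a measure" and \<Phi> :: "real \<Rightarrow> real"
  assumes "prob_space M" and "nonatomic M" and "orlicz_function \<Phi>"
  shows "((\<forall>\<rho>. proper_on (orlicz_space M \<Phi>) \<rho> \<and> convex_functional (orlicz_space M \<Phi>) \<rho>
              \<and> law_invariant M (orlicz_space M \<Phi>) \<rho> \<and> norm_lsc M \<Phi> \<rho> \<longrightarrow> fatou_property M \<Phi> \<rho>)
           \<longleftrightarrow> Delta2 \<Phi>)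
       \<and> ((\<forall>\<rho>. proper_on (orlicz_space M \<Phi>) \<rho> \<and> quasiconvex_functional (orlicz_space M \<Phi>) \<rho>
              \<and> law_invariant M (orlicz_space M \<Phi>) \<rho> \<and> norm_lsc M \<Phi> \<rho> \<longrightarrow> fatou_property M \<Phi> \<rho>)
           \<longleftrightarrow> Delta2 \<Phi>)"
proof -
  have finite: "finite_measure M"
    using assms(1) by (simp add: prob_space_def)
  have "\<not> fatou_property M \<Phi> (orlicz_heart_indicator M \<Phi>)" if "\<not> Delta2 \<Phi>"
    using not_delta2_orlicz_space_not_subset_heart[OF assms(3,1,2) that]
      orlicz_heart_indicator_not_fatou[OF assms(3) finite] by metis
  moreover note orlicz_heart_indicator_proper[OF assms(3)]
    orlicz_heart_indicator_convex[OF assms(3)] orlicz_heart_indicator_quasiconvex[OF assms(3)]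
    orlicz_heart_indicator_law_invariant[OF assms(3)] orlicz_heart_indicator_norm_lsc[OF assms(3)]
  ultimately show ?thesis
    using delta2_fatou_property[OF assms(3) _ finite] by blast
qed

end
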